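(* Let $d,s,n$ be positive integers, $f_0^*:\{\pm1\}^s\to\mathbb R$, $S^*\subset[d]$ with $|S^*|=s$, $f^*(\mathbf x)=f_0^*(\mathbf x_{S^*})$, and let $\mathcal D_n=\{(\mathbf X_i,Y_i)\}_{i=1}^n$ with $\mathbf X_i$ i.i.d. uniform on $\{\pm1\}^d$, $Y_i=f^*(\mathbf X_i)+\varepsilon_i$, $\varepsilon_i$ i.i.d. zero-mean independent of the covariates. Let $\hat f$ be a regression tree model fit by a regression tree algorithm $\mathcal A$ with random seed $\Theta$. Then $\mathfrak R(\hat f,f_0^*,d,n)\ge(1-\delta)\operatorname{Var}\{f_0^*(\mathbf X)\}$, where $\delta=\mathbb P\{J(\mathbf X;\mathcal D_n,\Theta)\cap S^*\ne\emptyset\}$ with $\mathbf X$ uniform on $\{\pm1\}^d$ independent of $(\mathcal D_n,\Theta)$.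
   Context: A cell is a subcube $C=\{\mathbf x:x_j=z_j,\ j\in J(C)\}$, split on $k\notin J(C)$ into $C\cap\{x_k=\pm1\}$. A regression tree model is a function constant on each leaf of a binary tree obtained by recursively splitting cells starting from $\{\pm1\}^d$; internal nodes are labeled by their split covariate. A regression tree algorithm maps $(\mathcal D_n,\Theta)$ to such a model, $\Theta$ being random and independent of the data. The query path of $\mathbf x$ is the root-to-leaf path to the leaf containing $\mathbf x$, and $J(\mathbf x;\mathcal D_n,\Theta)$ is the set of split covariates of the nodes on this path. $R(g,f^* )=\mathbb E_{\mathbf X}\{(g(\mathbf X)-f^*(\mathbf X))^2\}$, $\mathfrak R(\hat f,f_0^*,d,n)=\mathbb E_{\mathcal D_n,\Theta}R(\hat f(\cdot;\mathcal D_n,\Theta),f^* )$; $\operatorname{Var}\{f_0^*(\mathbf X)\}$ is the variance under the uniform distribution. *)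

theory Defs
  imports "HOL-Probability.Probability"
begin

text \<open>Points of the hypercube {+-1}^d are encoded as functions nat => bool on the
 coordinates 0..d-1 (True = +1, False = -1), equal to False off {0..<d}.\<close>

definition cube :: "nat \<Rightarrow> (nat \<Rightarrow> bool) set" where
  "cube d = {x. \<forall>i. d \<le> i \<longrightarrow> x i = False}"

text \<open>x_S for S a subset of {0..<d} with |S| = s: the coordinates of x in S, in
 increasing order, as a point of {+-1}^s.\<close>

definition proj :: "nat set \<Rightarrow> nat \<Rightarrow> (nat \<Rightarrow> bool) \<Rightarrow> (nat \<Rightarrow> bool)" where
  "proj S s x = (\<lambda>j. if j < s then x (sorted_list_of_set S ! j) else False)"

text \<open>Binary trees: Node k l r splits on covariate k; l is the cell x_k = -1,
 r is the cell x_k = +1.  Leaves carry the constant value of the model.\<close>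

datatype rtree = Leaf real | Node nat rtree rtree

fun eval_tree :: "rtree \<Rightarrow> (nat \<Rightarrow> bool) \<Rightarrow> real" where
  "eval_tree (Leaf c) x = c"
| "eval_tree (Node k l r) x = (if x k then eval_tree r x else eval_tree l x)"

text \<open>J(x): split covariates of the nodes on the query path of x.\<close>

fun path_vars :: "rtree \<Rightarrow> (nat \<Rightarrow> bool) \<Rightarrow> nat set" where
  "path_vars (Leaf c) x = {}"
| "path_vars (Node k l r) x = insert k (if x k then path_vars r x else path_vars l x)"

text \<open>Tree obtained by recursively splitting cells of {+-1}^d: each split covariate
 lies in [d] and is not among those already fixed by the cell (J(C)).\<close>

fun valid_tree :: "nat \<Rightarrow> nat set \<Rightarrow> rtree \<Rightarrow> bool" where
  "valid_tree d J (Leaf c) = True"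
| "valid_tree d J (Node k l r) =
     (k < d \<and> k \<notin> J \<and> valid_tree d (insert k J) l \<and> valid_tree d (insert k J) r)"

definition regression_tree :: "nat \<Rightarrow> rtree \<Rightarrow> bool" where
  "regression_tree d t = valid_tree d {} t"

definition risk :: "nat \<Rightarrow> ((nat \<Rightarrow> bool) \<Rightarrow> real) \<Rightarrow> ((nat \<Rightarrow> bool) \<Rightarrow> real) \<Rightarrow> real" where
  "risk d g f = measure_pmf.expectation (pmf_of_set (cube d)) (\<lambda>x. (g x - f x)\<^sup>2)"

definition cubeM :: "nat \<Rightarrow> (nat \<Rightarrow> bool) measure" where
  "cubeM d = uniform_count_measure (cube d)"

definition sampleM :: "nat \<Rightarrow> ((nat \<Rightarrow> bool) \<Rightarrow> real) \<Rightarrow> real measure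
     \<Rightarrow> ((nat \<Rightarrow> bool) \<times> real) measure" where
  "sampleM d f N = distr (cubeM d \<Otimes>\<^sub>M N) (count_space UNIV \<Otimes>\<^sub>M borel)
                     (\<lambda>(x, e). (x, f x + e))"

definition dataM :: "nat \<Rightarrow> nat \<Rightarrow> ((nat \<Rightarrow> bool) \<Rightarrow> real) \<Rightarrow> real measure
     \<Rightarrow> (nat \<Rightarrow> (nat \<Rightarrow> bool) \<times> real) measure" where
  "dataM d n f N = PiM {..<n} (\<lambda>_. sampleM d f N)"

end

theory Submission
  imports Defs
begin

(* On a cell of {+-1}^d that fixes no coordinate of S, all fibres of x |-> x_S have the same
   size, so x_S is uniform on {+-1}^s when x is uniform on the cell; hence any constant value
   on such a cell has mean squared error at least Var f0.  Summing over the cells of a tree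
   whose query path never splits on S, every tree has risk at least
   (1 - P_X(J(X) meets S)) Var f0.  Averaging over (D_n, Theta) and identifying the average of
   this probability with delta by Fubini gives the bound.  Since the bound holds tree by tree,
   nothing about the law of (D_n, Theta) is used beyond its being a probability measure. *)

lemma (in prob_space) variance_le_expectation_sq_diff:
  fixes X :: "'a \<Rightarrow> real"
  assumes "integrable M X" and "integrable M (\<lambda>x. (X x)\<^sup>2)"
  shows "variance X \<le> expectation (\<lambda>x. (c - X x)\<^sup>2)"
proof -
  have "expectation (\<lambda>x. (c - X x)\<^sup>2) = variance X + (c - expectation X)\<^sup>2"
    using assms by (simp add: variance_eq power2_diff prob_space field_simps power2_eq_square)
  then show ?thesis by simp
qed

lemma card_mult_variance_pmf_of_set_le:
  fixes g :: "'a \<Rightarrow> real"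
  assumes "finite A" and "A \<noteq> {}"
  shows "card A * measure_pmf.variance (pmf_of_set A) g \<le> (\<Sum>y\<in>A. (c - g y)\<^sup>2)"
proof -
  have "measure_pmf.variance (pmf_of_set A) g \<le> (\<Sum>y\<in>A. (c - g y)\<^sup>2) / card A"
    using measure_pmf.variance_le_expectation_sq_diff[of "pmf_of_set A" g c] assms
    by (simp add: integrable_measure_pmf_finite integral_pmf_of_set)
  moreover have "card A > 0"
    using assms by (simp add: card_gt_0_iff)
  ultimately show ?thesis
    by (simp add: field_simps)
qed

lemma measurable_measure_Pair:
  assumes "finite_measure N" and "E \<in> sets (M \<Otimes>\<^sub>M N)"
  shows "(\<lambda>p. measure N (Pair p -` E)) \<in> borel_measurable M"
proof -
  interpret N: finite_measure N by fact
  show ?thesis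
    unfolding measure_def by (intro borel_measurable_enn2real N.measurable_emeasure_Pair assms(2))
qed

lemma integrable_measure_Pair:
  assumes "finite_measure M" and "finite_measure N" and "E \<in> sets (M \<Otimes>\<^sub>M N)"
  shows "integrable M (\<lambda>p. measure N (Pair p -` E))"
proof -
  interpret M: finite_measure M by fact
  interpret N: finite_measure N by fact
  show ?thesis
    by (rule M.integrable_const_bound[where B = "measure N (space N)"])
       (auto intro: N.bounded_measure measurable_measure_Pair assms)
qed

lemma measure_pair_measure_eq_integral:
  assumes "finite_measure M" and "finite_measure N" and E: "E \<in> sets (M \<Otimes>\<^sub>M N)"
  shows "measure (M \<Otimes>\<^sub>M N) E = (\<integral>p. measure N (Pair p -` E) \<partial>M)"
proof -
  interpret N: finite_measure N by fact
  have "emeasure (M \<Otimes>\<^sub>M N) E = (\<integral>\<^sup>+p. emeasure N (Pair p -` E) \<partial>M)"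
    by (rule N.emeasure_pair_measure_alt[OF E])
  also have "\<dots> = (\<integral>\<^sup>+p. ennreal (measure N (Pair p -` E)) \<partial>M)"
    by (simp add: N.emeasure_eq_measure)
  also have "\<dots> = ennreal (\<integral>p. measure N (Pair p -` E) \<partial>M)"
    by (intro nn_integral_eq_integral integrable_measure_Pair assms) simp_all
  finally show ?thesis
    by (simp add: measure_def)
qed

lemma sets_Collect_of_measurable_count_space:
  assumes "f \<in> M \<rightarrow>\<^sub>M count_space UNIV"
  shows "{p \<in> space M. P (f p)} \<in> sets M"
proof -
  have "{p \<in> space M. P (f p)} = f -` {a. P a} \<inter> space M"
    by auto
  also have "\<dots> \<in> sets M"
    using assms by (rule measurable_sets) simp
  finally show ?thesis .
qed

lemma finite_cube: "finite (cube d)"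
proof -
  have "cube d = {x. \<forall>i. (i \<in> {..<d} \<longrightarrow> x i \<in> UNIV) \<and> (i \<notin> {..<d} \<longrightarrow> x i = False)}"
    unfolding cube_def by auto
  then show ?thesis
    using finite_set_of_finite_funs[of "{..<d}" "UNIV :: bool set" False] by simp
qed

lemma cube_nonempty: "cube d \<noteq> {}"
  unfolding cube_def by auto

lemma proj_in_cube: "proj S s x \<in> cube s"
  unfolding proj_def cube_def by auto

lemma space_cubeM: "space (cubeM d) = cube d"
  by (simp add: cubeM_def space_uniform_count_measure)

lemma sets_cubeM: "sets (cubeM d) = Pow (cube d)"
  by (simp add: cubeM_def sets_uniform_count_measure)

lemma prob_space_cubeM: "prob_space (cubeM d)"
  unfolding cubeM_def by (intro prob_space_uniform_count_measure finite_cube cube_nonempty)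

lemma measurable_cubeM: "g \<in> cube d \<rightarrow> space M \<Longrightarrow> g \<in> cubeM d \<rightarrow>\<^sub>M M"
  unfolding cubeM_def by (simp add: measurable_cong_sets[OF sets_uniform_count_measure_count_space refl])

definition cell :: "nat \<Rightarrow> nat set \<Rightarrow> (nat \<Rightarrow> bool) \<Rightarrow> (nat \<Rightarrow> bool) set" where
  "cell d J z = {x \<in> cube d. \<forall>j\<in>J. x j = z j}"

lemma finite_cell: "finite (cell d J z)"
  unfolding cell_def using finite_cube by simp

lemma cell_empty [simp]: "cell d {} z = cube d"
  unfolding cell_def by simp

lemma cell_insert_fun_upd:
  "k \<notin> J \<Longrightarrow> cell d (insert k J) (z(k := b)) = {x \<in> cell d J z. x k = b}"
  unfolding cell_def by auto

lemma override_on_in_cell: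
  "x \<in> cell d J z \<Longrightarrow> S \<subseteq> {..<d} \<Longrightarrow> J \<inter> S = {} \<Longrightarrow> override_on x g S \<in> cell d J z"
  unfolding cell_def cube_def override_on_def by auto

definition unproj :: "nat set \<Rightarrow> (nat \<Rightarrow> bool) \<Rightarrow> nat \<Rightarrow> bool" where
  "unproj S y = y \<circ> inv_into {..<card S} ((!) (sorted_list_of_set S))"

lemma proj_override_on_unproj:
  assumes "finite S" and "card S = s" and "y \<in> cube s"
  shows "proj S s (override_on x (unproj S y) S) = y"
proof
  fix i
  have bij: "bij_betw ((!) (sorted_list_of_set S)) {..<s} S"
    using assms by (intro bij_betw_nth) simp_all
  show "proj S s (override_on x (unproj S y) S) i = y i"
  proof (cases "i < s")
    case True
    then have "sorted_list_of_set S ! i \<in> S"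
      using bij by (auto dest: bij_betwE)
    moreover have "inv_into {..<s} ((!) (sorted_list_of_set S)) (sorted_list_of_set S ! i) = i"
      using bij True by (simp add: bij_betw_inv_into_left)
    ultimately show ?thesis
      using True assms(2) by (simp add: proj_def unproj_def)
  next
    case False
    then show ?thesis
      using assms(3) by (simp add: proj_def cube_def)
  qed
qed

lemma override_on_unproj_proj:
  assumes "finite S" and "card S = s"
  shows "override_on x (unproj S (proj S s x)) S = x"
proof
  fix j
  have bij: "bij_betw ((!) (sorted_list_of_set S)) {..<s} S"
    using assms by (intro bij_betw_nth) simp_all
  show "override_on x (unproj S (proj S s x)) S j = x j"
  proof (cases "j \<in> S")
    case True
    let ?i = "inv_into {..<s} ((!) (sorted_list_of_set S)) j"
    have "?i \<in> {..<s}"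
      using bij True by (metis bij_betw_def inv_into_into)
    moreover have "sorted_list_of_set S ! ?i = j"
      using bij True by (simp add: bij_betw_inv_into_right)
    ultimately show ?thesis
      using True assms(2) by (simp add: proj_def unproj_def)
  qed simp
qed

lemma card_cell_proj_fiber_eq:
  assumes S: "S \<subseteq> {..<d}" "card S = s" and JS: "J \<inter> S = {}"
    and y: "y \<in> cube s" and y': "y' \<in> cube s"
  shows "card {x \<in> cell d J z. proj S s x = y} = card {x \<in> cell d J z. proj S s x = y'}"
proof -
  have fin: "finite S"
    using S(1) finite_subset by blast
  have twice: "override_on (override_on x g S) h S = override_on x h S" for x g h :: "nat \<Rightarrow> bool"
    by (simp add: override_on_def fun_eq_iff)
  have "bij_betw (\<lambda>x. override_on x (unproj S y') S)
          {x \<in> cell d J z. proj S s x = y} {x \<in> cell d J z. proj S s x = y'}"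
    by (rule bij_betw_byWitness[where f' = "\<lambda>x. override_on x (unproj S y) S"])
       (auto simp: twice override_on_unproj_proj[OF fin S(2)] proj_override_on_unproj[OF fin S(2)]
          y y' override_on_in_cell[OF _ S(1) JS])
  then show ?thesis
    by (rule bij_betw_same_card)
qed

lemma card_cube_mult_sum_cell_proj:
  fixes h :: "(nat \<Rightarrow> bool) \<Rightarrow> real"
  assumes S: "S \<subseteq> {..<d}" "card S = s" and JS: "J \<inter> S = {}"
  shows "card (cube s) * (\<Sum>x\<in>cell d J z. h (proj S s x)) = card (cell d J z) * (\<Sum>y\<in>cube s. h y)"
proof -
  define m where "m = card {x \<in> cell d J z. proj S s x = (\<lambda>_. False)}"
  have fiber: "card {x \<in> cell d J z. proj S s x = y} = m" if "y \<in> cube s" for y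
    unfolding m_def using card_cell_proj_fiber_eq[OF S JS that] by (simp add: cube_def)
  have sum_eq: "(\<Sum>x\<in>cell d J z. g (proj S s x)) = m * (\<Sum>y\<in>cube s. g y)" for g :: "_ \<Rightarrow> real"
  proof -
    have "(\<Sum>x\<in>cell d J z. g (proj S s x))
        = (\<Sum>y\<in>cube s. \<Sum>x\<in>{x \<in> cell d J z. proj S s x = y}. g (proj S s x))"
      by (rule sum.group[symmetric]) (auto simp: finite_cell finite_cube proj_in_cube)
    also have "\<dots> = (\<Sum>y\<in>cube s. m * g y)"
      by (rule sum.cong) (simp_all add: fiber)
    finally show ?thesis
      by (simp add: sum_distrib_left)
  qed
  from sum_eq[of "\<lambda>_. 1"] sum_eq[of h] show ?thesis
    by simp
qed

lemma card_cell_mult_variance_le_sum_sq: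
  assumes S: "S \<subseteq> {..<d}" "card S = s" and JS: "J \<inter> S = {}"
  shows "card (cell d J z) * measure_pmf.variance (pmf_of_set (cube s)) f0
         \<le> (\<Sum>x\<in>cell d J z. (c - f0 (proj S s x))\<^sup>2)"
proof -
  let ?V = "measure_pmf.variance (pmf_of_set (cube s)) f0"
  have K: "real (card (cube s)) > 0"
    using finite_cube cube_nonempty by (simp add: card_gt_0_iff)
  have "card (cube s) * (card (cell d J z) * ?V) = card (cell d J z) * (card (cube s) * ?V)"
    by simp
  also have "\<dots> \<le> card (cell d J z) * (\<Sum>y\<in>cube s. (c - f0 y)\<^sup>2)"
    by (intro mult_left_mono card_mult_variance_pmf_of_set_le finite_cube cube_nonempty) simp
  also have "\<dots> = card (cube s) * (\<Sum>x\<in>cell d J z. (c - f0 (proj S s x))\<^sup>2)"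
    by (rule card_cube_mult_sum_cell_proj[OF S JS, symmetric])
  finally show ?thesis
    using K by simp
qed

lemma variance_mult_card_path_avoiding_le_sum_sq:
  assumes S: "S \<subseteq> {..<d}" "card S = s" and "valid_tree d J t"
  shows "measure_pmf.variance (pmf_of_set (cube s)) f0 * card {x \<in> cell d J z. (J \<union> path_vars t x) \<inter> S = {}}
         \<le> (\<Sum>x\<in>cell d J z. (eval_tree t x - f0 (proj S s x))\<^sup>2)"
  using assms(3)
proof (induction t arbitrary: J z)
  case (Leaf c)
  show ?case
  proof (cases "J \<inter> S = {}")
    case True
    then show ?thesis
      using card_cell_mult_variance_le_sum_sq[OF S True, of z f0 c] by (simp add: mult.commute)
  next
    case False
    then show ?thesis
      by (simp add: sum_nonneg)
  qed
next
  case (Node k l r)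
  let ?V = "measure_pmf.variance (pmf_of_set (cube s)) f0"
  let ?err = "\<lambda>t x. (eval_tree t x - f0 (proj S s x))\<^sup>2"
  let ?avoids = "\<lambda>J t x. (J \<union> path_vars t x) \<inter> S = {}"
  define C1 where "C1 = cell d (insert k J) (z(k := True))"
  define C0 where "C0 = cell d (insert k J) (z(k := False))"
  have "k \<notin> J" and l: "valid_tree d (insert k J) l" and r: "valid_tree d (insert k J) r"
    using Node.prems by simp_all
  then have C1: "C1 = {x \<in> cell d J z. x k}" and C0: "C0 = {x \<in> cell d J z. \<not> x k}"
    unfolding C1_def C0_def by (simp_all add: cell_insert_fun_upd)
  have split: "cell d J z = C1 \<union> C0" "C1 \<inter> C0 = {}" "finite C1" "finite C0"
    unfolding C1 C0 by (auto simp: finite_cell)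
  have "?V * card {x \<in> cell d J z. ?avoids J (Node k l r) x}
      = ?V * card ({x \<in> C1. ?avoids (insert k J) r x} \<union> {x \<in> C0. ?avoids (insert k J) l x})"
    unfolding C1 C0 by (rule arg_cong2[where f = "\<lambda>a b. a * real (card b)"]) auto
  also have "\<dots> = ?V * card {x \<in> C1. ?avoids (insert k J) r x} + ?V * card {x \<in> C0. ?avoids (insert k J) l x}"
    using split by (subst card_Un_disjoint) (auto simp: distrib_left)
  also have "\<dots> \<le> (\<Sum>x\<in>C1. ?err r x) + (\<Sum>x\<in>C0. ?err l x)"
    unfolding C1_def C0_def by (intro add_mono Node.IH(1)[OF l] Node.IH(2)[OF r])
  also have "\<dots> = (\<Sum>x\<in>C1. ?err (Node k l r) x) + (\<Sum>x\<in>C0. ?err (Node k l r) x)"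
    unfolding C1 C0 by (intro arg_cong2[where f = "(+)"] sum.cong) auto
  also have "\<dots> = (\<Sum>x\<in>cell d J z. ?err (Node k l r) x)"
    using split by (simp add: sum.union_disjoint)
  finally show ?case .
qed

lemma variance_mult_prob_path_avoiding_le_risk:
  assumes S: "S \<subseteq> {..<d}" "card S = s" and "regression_tree d t"
  shows "(1 - measure (cubeM d) {x \<in> cube d. path_vars t x \<inter> S \<noteq> {}})
           * measure_pmf.variance (pmf_of_set (cube s)) f0
         \<le> risk d (eval_tree t) (\<lambda>x. f0 (proj S s x))"
proof -
  let ?V = "measure_pmf.variance (pmf_of_set (cube s)) f0"
  let ?K = "real (card (cube d))"
  let ?avoiding = "{x \<in> cube d. path_vars t x \<inter> S = {}}"
  interpret prob_space "cubeM d"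
    by (rule prob_space_cubeM)
  have "?avoiding = space (cubeM d) - {x \<in> cube d. path_vars t x \<inter> S \<noteq> {}}"
    by (auto simp: space_cubeM)
  moreover have "{x \<in> cube d. path_vars t x \<inter> S \<noteq> {}} \<in> events"
    by (auto simp: sets_cubeM)
  ultimately have "1 - measure (cubeM d) {x \<in> cube d. path_vars t x \<inter> S \<noteq> {}} = measure (cubeM d) ?avoiding"
    by (simp add: prob_compl)
  also have "\<dots> = card ?avoiding / ?K"
    by (simp add: cubeM_def measure_uniform_count_measure finite_cube)
  finally have "(1 - measure (cubeM d) {x \<in> cube d. path_vars t x \<inter> S \<noteq> {}}) * ?V = ?V * card ?avoiding / ?K"
    by simp
  also have "\<dots> \<le> (\<Sum>x\<in>cube d. (eval_tree t x - f0 (proj S s x))\<^sup>2) / ?K"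
    using variance_mult_card_path_avoiding_le_sum_sq[OF S, of "{}" t f0 undefined] assms(3)
    by (intro divide_right_mono) (simp_all add: regression_tree_def)
  also have "\<dots> = risk d (eval_tree t) (\<lambda>x. f0 (proj S s x))"
    by (simp add: risk_def integral_pmf_of_set finite_cube cube_nonempty)
  finally show ?thesis .
qed

lemma prob_space_dataM:
  assumes "prob_space N" and "sets N = sets borel"
  shows "prob_space (dataM d n f N)"
  unfolding dataM_def
proof (rule prob_space_PiM)
  have "snd \<in> borel_measurable (cubeM d \<Otimes>\<^sub>M N)"
    using measurable_snd measurable_cong_sets[OF refl assms(2)] by blast
  then have "(\<lambda>z. (fst z, f (fst z) + snd z)) \<in> measurable (cubeM d \<Otimes>\<^sub>M N) (count_space UNIV \<Otimes>\<^sub>M borel)"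
    by (intro measurable_Pair borel_measurable_add measurable_compose[OF measurable_fst measurable_cubeM]) simp_all
  then have "(\<lambda>(x, e). (x, f x + e)) \<in> measurable (cubeM d \<Otimes>\<^sub>M N) (count_space UNIV \<Otimes>\<^sub>M borel)"
    by (simp add: case_prod_beta)
  then show "prob_space (sampleM d f N)" for i
    unfolding sampleM_def
    by (intro prob_space.prob_space_distr prob_space_pair prob_space_cubeM assms(1))
qed

lemma sets_pair_cubeM_Collect:
  assumes "\<And>x. x \<in> cube d \<Longrightarrow> {p \<in> space M. P p x} \<in> sets M"
  shows "{(p, x) \<in> space (M \<Otimes>\<^sub>M cubeM d). P p x} \<in> sets (M \<Otimes>\<^sub>M cubeM d)"
proof -
  have "{(p, x) \<in> space (M \<Otimes>\<^sub>M cubeM d). P p x} = (\<Union>x\<in>cube d. {p \<in> space M. P p x} \<times> {x})"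
    by (auto simp: space_pair_measure space_cubeM)
  also have "\<dots> \<in> sets (M \<Otimes>\<^sub>M cubeM d)"
    using assms by (intro sets.finite_UN finite_cube pair_measureI) (auto simp: sets_cubeM)
  finally show ?thesis .
qed

lemma measure_pair_cubeM_Collect:
  assumes M: "finite_measure M" and sections: "\<And>x. x \<in> cube d \<Longrightarrow> {p \<in> space M. P p x} \<in> sets M"
  shows "measure (M \<Otimes>\<^sub>M cubeM d) {(p, x) \<in> space (M \<Otimes>\<^sub>M cubeM d). P p x}
           = (\<integral>p. measure (cubeM d) {x \<in> cube d. P p x} \<partial>M)"
    and "integrable M (\<lambda>p. measure (cubeM d) {x \<in> cube d. P p x})"
proof -
  let ?E = "{(p, x) \<in> space (M \<Otimes>\<^sub>M cubeM d). P p x}"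
  have C: "finite_measure (cubeM d)"
    using prob_space_cubeM by (rule prob_space.finite_measure)
  have E: "?E \<in> sets (M \<Otimes>\<^sub>M cubeM d)"
    using sections by (rule sets_pair_cubeM_Collect)
  have slice: "measure (cubeM d) (Pair p -` ?E) = measure (cubeM d) {x \<in> cube d. P p x}" if "p \<in> space M" for p
    using that by (auto simp: space_pair_measure space_cubeM intro!: arg_cong2[where f = measure])
  show "measure (M \<Otimes>\<^sub>M cubeM d) ?E = (\<integral>p. measure (cubeM d) {x \<in> cube d. P p x} \<partial>M)"
    using measure_pair_measure_eq_integral[OF M C E] slice by (simp cong: Bochner_Integration.integral_cong)
  have "integrable M (\<lambda>p. measure (cubeM d) (Pair p -` ?E))
      \<longleftrightarrow> integrable M (\<lambda>p. measure (cubeM d) {x \<in> cube d. P p x})"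
    by (intro Bochner_Integration.integrable_cong refl slice)
  then show "integrable M (\<lambda>p. measure (cubeM d) {x \<in> cube d. P p x})"
    using integrable_measure_Pair[OF M C E] by blast
qed

theorem lemma3:
  fixes d s n :: nat
    and f0 :: "(nat \<Rightarrow> bool) \<Rightarrow> real"
    and S :: "nat set"
    and N :: "real measure"
    and Q :: "'th measure"
    and A :: "(nat \<Rightarrow> (nat \<Rightarrow> bool) \<times> real) \<Rightarrow> 'th \<Rightarrow> rtree"
  assumes "0 < d" and "0 < s" and "0 < n"
    and "S \<subseteq> {..<d}" and "card S = s"
    and "prob_space N" and "sets N = sets borel"
    and "integrable N (\<lambda>e. e)" and "(\<integral>e. e \<partial>N) = 0"
    and "prob_space Q"
    and "\<forall>D \<theta>. regression_tree d (A D \<theta>)"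
    and "\<forall>x. (\<lambda>p. eval_tree (A (fst p) (snd p)) x)
               \<in> borel_measurable (dataM d n (\<lambda>x. f0 (proj S s x)) N \<Otimes>\<^sub>M Q)"
    and "\<forall>x. (\<lambda>p. path_vars (A (fst p) (snd p)) x)
               \<in> measurable (dataM d n (\<lambda>x. f0 (proj S s x)) N \<Otimes>\<^sub>M Q) (count_space UNIV)"
  shows "(\<integral>\<^sup>+ p. ennreal (risk d (eval_tree (A (fst p) (snd p))) (\<lambda>x. f0 (proj S s x)))
             \<partial>(dataM d n (\<lambda>x. f0 (proj S s x)) N \<Otimes>\<^sub>M Q))
         \<ge> ennreal ((1 - measure ((dataM d n (\<lambda>x. f0 (proj S s x)) N \<Otimes>\<^sub>M Q) \<Otimes>\<^sub>M cubeM d)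
                              {((D, \<theta>), x) \<in> space ((dataM d n (\<lambda>x. f0 (proj S s x)) N \<Otimes>\<^sub>M Q) \<Otimes>\<^sub>M cubeM d).
                                  path_vars (A D \<theta>) x \<inter> S \<noteq> {}})
                    * measure_pmf.variance (pmf_of_set (cube s)) f0)"
proof -
  let ?M = "dataM d n (\<lambda>x. f0 (proj S s x)) N \<Otimes>\<^sub>M Q"
  let ?V = "measure_pmf.variance (pmf_of_set (cube s)) f0"
  let ?\<delta> = "\<lambda>p. measure (cubeM d) {x \<in> cube d. path_vars (A (fst p) (snd p)) x \<inter> S \<noteq> {}}"
  interpret M: prob_space ?M
    using assms(6,7,10) by (intro prob_space_pair prob_space_dataM)
  have sections: "{p \<in> space ?M. path_vars (A (fst p) (snd p)) x \<inter> S \<noteq> {}} \<in> sets ?M" for x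
    using assms(13) by (intro sets_Collect_of_measurable_count_space) simp
  note fubini = measure_pair_cubeM_Collect[where P = "\<lambda>p x. path_vars (A (fst p) (snd p)) x \<inter> S \<noteq> {}",
      OF M.finite_measure_axioms sections]
  have "{((D, \<theta>), x) \<in> space (?M \<Otimes>\<^sub>M cubeM d). path_vars (A D \<theta>) x \<inter> S \<noteq> {}}
      = {(p, x) \<in> space (?M \<Otimes>\<^sub>M cubeM d). path_vars (A (fst p) (snd p)) x \<inter> S \<noteq> {}}"
    by auto
  then have \<delta>: "measure (?M \<Otimes>\<^sub>M cubeM d)
      {((D, \<theta>), x) \<in> space (?M \<Otimes>\<^sub>M cubeM d). path_vars (A D \<theta>) x \<inter> S \<noteq> {}} = (\<integral>p. ?\<delta> p \<partial>?M)"
    using fubini(1) by simp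
  have "ennreal ((1 - (\<integral>p. ?\<delta> p \<partial>?M)) * ?V) = ennreal (\<integral>p. (1 - ?\<delta> p) * ?V \<partial>?M)"
    using fubini(2) by (simp add: M.prob_space Bochner_Integration.integral_diff)
  also have "\<dots> = (\<integral>\<^sup>+p. ennreal ((1 - ?\<delta> p) * ?V) \<partial>?M)"
    using fubini(2) prob_space.prob_le_1[OF prob_space_cubeM]
    by (intro nn_integral_eq_integral[symmetric] AE_I2 mult_nonneg_nonneg) simp_all
  also have "\<dots> \<le> (\<integral>\<^sup>+ p. ennreal (risk d (eval_tree (A (fst p) (snd p))) (\<lambda>x. f0 (proj S s x))) \<partial>?M)"
    using variance_mult_prob_path_avoiding_le_risk assms(4,5,11) by (intro nn_integral_mono ennreal_leI) simp
  finally show ?thesis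
    unfolding \<delta> .
qed

end
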